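(* Let $A=S_{\mathbf q}(V)$ and let $K_\bullet$ be its Koszul bimodule resolution (defined in the context). Define left $A$-module maps $t_{-1}\colon A\to A\otimes A$ by $t_{-1}(1)=1\otimes 1$ and, for $p\ge 0$, $t_p\colon K_p\to K_{p+1}$ on the left $A$-basis elements $1\otimes(x_{j_1}\wedge\cdots\wedge x_{j_p})\otimes\underline{x}^{\underline{\ell}}$ ($1\le j_1<\cdots<j_p\le N$, $\underline{\ell}\in\mathbb{N}^N$) by $$t_p\big(1\otimes(x_{j_1}\wedge\cdots\wedge x_{j_p})\otimes\underline{x}^{\underline{\ell}}\big)=(-1)^{p+1}\sum_{j_{p+1}=j_p+1}^{N}\sum_{r=1}^{\ell_{j_{p+1}}}\lambda^{(\underline{\ell};j_1,\dots,j_p)}_{j_{p+1},r}\ x_{j_{p+1}}^{\ell_{j_{p+1}}-r}x_{j_{p+1}+1}^{\ell_{j_{p+1}+1}}\cdots x_N^{\ell_N}\otimes(x_{j_1}\wedge\cdots\wedge x_{j_{p+1}})\otimes x_1^{\ell_1}\cdots x_{j_{p+1}-1}^{\ell_{j_{p+1}-1}}x_{j_{p+1}}^{r-1},$$ where (writing $m=j_{p+1}$) $$\lambda^{(\underline{\ell};j_1,\dots,j_p)}_{m,r}=\Big(\prod_{s=1}^{m-1}\prod_{t=m}^{N}q_{s,t}^{\ell_s\ell_t}\Big)\Big(\prod_{t=1}^Nq_{m,t}^{\ell_t}\Big)^{r-1}\Big(\prod_{t=1}^pq_{j_t,m}^{\ell_m-r}\Big)\Big(\prod_{s=1}^{p+1}\prod_{t=m+1}^Nq_{j_s,t}^{\ell_t}\Big),$$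 with the convention $j_0=0$ when $p=0$, and extended left $A$-linearly. Then $d_0t_{-1}=\mathrm{Id}_A$ and $t_{p-1}d_p+d_{p+1}t_p=\mathrm{Id}_{K_p}$ for all $p\ge0$, i.e. $(t_p)_{p\ge-1}$ is a chain contraction of $K_\bullet$.
   Context: $\mathbb{k}$ is a field, $N\ge1$, and $\mathbf q=(q_{i,j})_{1\le i,j\le N}$ are nonzero scalars in $\mathbb{k}$ with $q_{i,i}=1$ and $q_{j,i}=q_{i,j}^{-1}$. $V$ has basis $x_1,\dots,x_N$, and $S_{\mathbf q}(V)=\mathbb{k}\langle x_1,\dots,x_N\mid x_ix_j=q_{i,j}x_jx_i\ \forall i,j\rangle$ is the quantum symmetric algebra; the ordered monomials $\underline{x}^{\underline{\ell}}=x_1^{\ell_1}\cdots x_N^{\ell_N}$, $\underline{\ell}\in\mathbb{N}^N$, form a $\mathbb{k}$-basis. The Koszul resolution $K_\bullet$ of $A=S_{\mathbf q}(V)$ has $K_p=A\otimes\bigwedge^p(V)\otimes A$ ($0\le p\le N$), the free $A$-bimodule with basis $1\otimes(x_{j_1}\wedge\cdots\wedge x_{j_p})\otimes1$, $1\le j_1<\cdots<j_p\le N$; $d_0$ is multiplication and for $p\ge1$ $$d_p(1\otimes(x_{j_1}\wedge\cdots\wedge x_{j_p})\otimes1)=\sum_{i=1}^p(-1)^{i+1}\Big(\prod_{s=1}^iq_{j_s,j_i}\Big)x_{j_i}\otimes(x_{j_1}\wedge\cdots\widehat{x_{j_i}}\cdots\wedge x_{j_p})\otimes1-\sum_{i=1}^p(-1)^{i+1}\Big(\prod_{s=i}^pq_{j_i,j_s}\Big)1\otimes(x_{j_1}\wedge\cdots\widehat{x_{j_i}}\cdots\wedge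 x_{j_p})\otimes x_{j_i},$$ where the hat denotes omission. *)

theory Defs
  imports Main
begin

text \<open>
  Exponent vectors are functions nat \<Rightarrow> nat supported on {1..N};
  the monomial x^a = x_1^(a 1) ... x_N^(a N).  A wedge x_{j_1} \<and> ... \<and> x_{j_p}
  with j_1 < ... < j_p is the strictly increasing list [j_1,...,j_p].
  The k-basis of K_p = A \<otimes> \<Lambda>^p V \<otimes> A consists of triples (a, J, b) standing for
  x^a \<otimes> (wedge J) \<otimes> x^b; elements of K_p are finitely supported coefficient
  functions on such triples; elements of A are finitely supported coefficient
  functions on exponent vectors.  Maps are given on the k-basis and extended
  k-linearly (this agrees with the left A-linear / bimodule extension, since
  the basis images are computed with the quantum multiplication rule
  x^a x^b = mcoef a b x^(a+b)).
\<close>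

type_synonym expv = "nat \<Rightarrow> nat"
type_synonym kbas = "expv \<times> nat list \<times> expv"

definition valid_exp :: "nat \<Rightarrow> expv \<Rightarrow> bool" where
  "valid_exp N a \<longleftrightarrow> (\<forall>i. a i \<noteq> 0 \<longrightarrow> i \<in> {1..N})"

definition valid_wedge :: "nat \<Rightarrow> nat \<Rightarrow> nat list \<Rightarrow> bool" where
  "valid_wedge N p J \<longleftrightarrow> sorted_wrt (<) J \<and> set J \<subseteq> {1..N} \<and> length J = p"

definition inK :: "nat \<Rightarrow> nat \<Rightarrow> (kbas \<Rightarrow> 'k::zero) \<Rightarrow> bool" where
  "inK N p f \<longleftrightarrow> finite {x. f x \<noteq> 0} \<and>
     (\<forall>a J b. f (a, J, b) \<noteq> 0 \<longrightarrow> valid_exp N a \<and> valid_wedge N p J \<and> valid_exp N b)"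

definition inA :: "nat \<Rightarrow> (expv \<Rightarrow> 'k::zero) \<Rightarrow> bool" where
  "inA N g \<longleftrightarrow> finite {x. g x \<noteq> 0} \<and> (\<forall>a. g a \<noteq> 0 \<longrightarrow> valid_exp N a)"

definition lext :: "('b \<Rightarrow> 'c \<Rightarrow> 'k::comm_ring_1) \<Rightarrow> ('b \<Rightarrow> 'k) \<Rightarrow> 'c \<Rightarrow> 'k" where
  "lext g f = (\<lambda>y. \<Sum>x\<in>{x. f x \<noteq> 0}. f x * g x y)"

definition eunit :: "nat \<Rightarrow> expv" where
  "eunit j = (\<lambda>i. if i = j then 1 else 0)"

definition eadd :: "expv \<Rightarrow> expv \<Rightarrow> expv" where
  "eadd a b = (\<lambda>i. a i + b i)"

definition ezero :: expv where
  "ezero = (\<lambda>_. 0)"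

text \<open>x^a x^b = mcoef q N a b x^(a+b) in S_q(V).\<close>
definition mcoef :: "(nat \<Rightarrow> nat \<Rightarrow> 'k::comm_ring_1) \<Rightarrow> nat \<Rightarrow> expv \<Rightarrow> expv \<Rightarrow> 'k" where
  "mcoef q N a b = (\<Prod>s\<in>{1..N}. \<Prod>t\<in>{1..N}. if t < s then q s t ^ (a s * b t) else 1)"

definition remove_nth :: "nat \<Rightarrow> 'a list \<Rightarrow> 'a list" where
  "remove_nth k J = take k J @ drop (Suc k) J"

text \<open>The Koszul differential d_p (p \<ge> 1) on the basis element x^a \<otimes> wedge J \<otimes> x^b.\<close>
definition dbas :: "(nat \<Rightarrow> nat \<Rightarrow> 'k::comm_ring_1) \<Rightarrow> nat \<Rightarrow> kbas \<Rightarrow> kbas \<Rightarrow> 'k" where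
  "dbas q N x y = (case x of (a, J, b) \<Rightarrow>
     (\<Sum>k<length J.
        (if y = (eadd a (eunit (J!k)), remove_nth k J, b)
         then (-1)^k * (\<Prod>s\<le>k. q (J!s) (J!k)) * mcoef q N a (eunit (J!k)) else 0)
      - (if y = (a, remove_nth k J, eadd (eunit (J!k)) b)
         then (-1)^k * (\<Prod>s\<in>{k..<length J}. q (J!k) (J!s)) * mcoef q N (eunit (J!k)) b else 0)))"

definition dK :: "(nat \<Rightarrow> nat \<Rightarrow> 'k::comm_ring_1) \<Rightarrow> nat \<Rightarrow> (kbas \<Rightarrow> 'k) \<Rightarrow> kbas \<Rightarrow> 'k" where
  "dK q N = lext (dbas q N)"

text \<open>d_0 : K_0 \<rightarrow> A, the multiplication map.\<close>
definition d0 :: "(nat \<Rightarrow> nat \<Rightarrow> 'k::comm_ring_1) \<Rightarrow> nat \<Rightarrow> (kbas \<Rightarrow> 'k) \<Rightarrow> expv \<Rightarrow> 'k" where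
  "d0 q N = lext (\<lambda>(a, J, b) y. if y = eadd a b then mcoef q N a b else 0)"

text \<open>t_{-1} : A \<rightarrow> A \<otimes> A, x^a \<mapsto> x^a \<otimes> 1.\<close>
definition tm1 :: "(expv \<Rightarrow> 'k::comm_ring_1) \<Rightarrow> kbas \<Rightarrow> 'k" where
  "tm1 = lext (\<lambda>a y. if y = (a, [], ezero) then 1 else 0)"

definition lam :: "(nat \<Rightarrow> nat \<Rightarrow> 'k::comm_ring_1) \<Rightarrow> nat \<Rightarrow> expv \<Rightarrow> nat list \<Rightarrow> nat \<Rightarrow> nat \<Rightarrow> 'k" where
  "lam q N l J m r =
     (\<Prod>s\<in>{1..m-1}. \<Prod>t\<in>{m..N}. q s t ^ (l s * l t))
   * (\<Prod>t\<in>{1..N}. q m t ^ l t) ^ (r - 1)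
   * (\<Prod>t<length J. q (J!t) m ^ (l m - r))
   * (\<Prod>s<length J + 1. \<Prod>t\<in>{m+1..N}. q ((J @ [m])!s) t ^ l t)"

text \<open>u = x_m^{l_m - r} x_{m+1}^{l_{m+1}} ... x_N^{l_N},  v = x_1^{l_1} ... x_{m-1}^{l_{m-1}} x_m^{r-1}.\<close>
definition uexp :: "expv \<Rightarrow> nat \<Rightarrow> nat \<Rightarrow> expv" where
  "uexp l m r = (\<lambda>i. if i < m then 0 else if i = m then l m - r else l i)"

definition vexp :: "expv \<Rightarrow> nat \<Rightarrow> nat \<Rightarrow> expv" where
  "vexp l m r = (\<lambda>i. if i < m then l i else if i = m then r - 1 else 0)"

text \<open>t_p (p = length J) on x^a \<otimes> wedge J \<otimes> x^l, i.e. x^a times the formula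
  for t_p(1 \<otimes> wedge J \<otimes> x^l) (left A-linear extension); j_0 = 0 when p = 0.\<close>
definition tbas :: "(nat \<Rightarrow> nat \<Rightarrow> 'k::comm_ring_1) \<Rightarrow> nat \<Rightarrow> kbas \<Rightarrow> kbas \<Rightarrow> 'k" where
  "tbas q N x y = (case x of (a, J, l) \<Rightarrow>
     (-1)^(length J + 1) *
     (\<Sum>m\<in>{(if J = [] then 0 else last J) + 1..N}. \<Sum>r\<in>{1..l m}.
        (if y = (eadd a (uexp l m r), J @ [m], vexp l m r)
         then lam q N l J m r * mcoef q N a (uexp l m r) else 0)))"

definition tK :: "(nat \<Rightarrow> nat \<Rightarrow> 'k::comm_ring_1) \<Rightarrow> nat \<Rightarrow> (kbas \<Rightarrow> 'k) \<Rightarrow> kbas \<Rightarrow> 'k" where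
  "tK q N = lext (tbas q N)"

end

theory Submission
  imports Defs
begin

(* Give the basis vector  x^a (x) wedge J (x) x^b  of K_p the weight
   "weight q N (a,J,b)": the scalar by which the word  x^a (prod_{j in J} x_j) x^b
   differs from its ordered monomial.  Rescaling every basis vector by its weight is an
   isomorphism from the q-Koszul complex onto the Koszul complex of the polynomial ring
   (q = 1) which also carries the maps t_p for q to those for q = 1.  Hence it suffices
   to prove
     (i)  the case q = 1, where all coefficients are +-1 and  t d + d t = id  on a basis
          vector is a telescoping computation, and
     (ii) the intertwining identities, one for each coefficient of d and of t.  Each is an
          equality between two monomials in the q_ij; since q_ii = 1 and q_ji = 1/q_ij,
          two such monomials agree as soon as their exponent matrices have the same
          antisymmetric part (qpow_eq_antisym). *)

definition kdelta :: "'a \<Rightarrow> 'a \<Rightarrow> 'k::{zero,one}" where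
  "kdelta x y = (if y = x then 1 else 0)"

lemma lext_eq_sum:
  assumes "finite S" "{x. f x \<noteq> 0} \<subseteq> S"
  shows "lext g f y = (\<Sum>x\<in>S. f x * g x y)"
  unfolding lext_def using assms by (intro sum.mono_neutral_left) auto

lemma sum_kdelta:
  assumes "finite S" "Y \<in> S"
  shows "(\<Sum>x\<in>S. kdelta Y x * h x) = (h Y :: 'k::comm_ring_1)"
proof -
  have "(\<Sum>x\<in>S. kdelta Y x * h x) = (\<Sum>x\<in>S. if x = Y then h x else 0)"
    by (rule sum.cong) (auto simp: kdelta_def)
  then show ?thesis using assms by (simp add: sum.delta)
qed

lemma lext_kdelta:
  assumes "finite {x. f x \<noteq> 0}"
  shows "lext kdelta f = (f :: 'a \<Rightarrow> 'k::comm_ring_1)"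
proof
  fix y
  have "lext kdelta f y = (\<Sum>x\<in>{x. f x \<noteq> 0}. if x = y then f x else 0)"
    unfolding lext_def by (rule sum.cong) (auto simp: kdelta_def)
  also have "\<dots> = f y" using assms by (simp add: sum.delta)
  finally show "lext kdelta f y = f y" .
qed

lemma lext_single: "lext h (kdelta c) y = (h c y :: 'k::comm_ring_1)"
  by (subst lext_eq_sum[where S = "{c}"]) (auto simp: kdelta_def)

lemma lext_supp: "{z. lext g f z \<noteq> 0} \<subseteq> (\<Union>x\<in>{x. f x \<noteq> 0}. {z. g x z \<noteq> 0})"
proof
  fix z assume "z \<in> {z. lext g f z \<noteq> 0}"
  then have "(\<Sum>x\<in>{x. f x \<noteq> 0}. f x * g x z) \<noteq> 0" by (simp add: lext_def)
  then obtain x where "x \<in> {x. f x \<noteq> 0}" "f x * g x z \<noteq> 0" by (meson sum.neutral)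
  then show "z \<in> (\<Union>x\<in>{x. f x \<noteq> 0}. {z. g x z \<noteq> 0})" by auto
qed

lemma lext_fin:
  "finite {x. f x \<noteq> 0} \<Longrightarrow> (\<And>x. finite {z. g x z \<noteq> 0}) \<Longrightarrow> finite {z. lext g f z \<noteq> 0}"
  by (rule finite_subset[OF lext_supp]) auto

lemma lext_comp:
  assumes fin: "finite {x. f x \<noteq> 0}" and fin_g: "\<And>x. finite {z. g x z \<noteq> 0}"
  shows "lext h (lext g f) y = (\<Sum>x\<in>{x. f x \<noteq> 0}. f x * lext h (g x) y)"
proof -
  let ?F = "{x. f x \<noteq> 0}"
  define S where "S = (\<Union>x\<in>?F. {z. g x z \<noteq> 0})"
  have fS: "finite S" using assms unfolding S_def by auto
  have "lext h (lext g f) y = (\<Sum>z\<in>S. lext g f z * h z y)"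
    by (rule lext_eq_sum[OF fS]) (use lext_supp[of g f] in \<open>simp add: S_def\<close>)
  also have "\<dots> = (\<Sum>z\<in>S. \<Sum>x\<in>?F. f x * g x z * h z y)"
    by (simp add: lext_def sum_distrib_right)
  also have "\<dots> = (\<Sum>x\<in>?F. \<Sum>z\<in>S. f x * g x z * h z y)"
    by (rule sum.swap)
  also have "\<dots> = (\<Sum>x\<in>?F. f x * lext h (g x) y)"
  proof (rule sum.cong[OF refl])
    fix x assume "x \<in> ?F"
    then have "lext h (g x) y = (\<Sum>z\<in>S. g x z * h z y)"
      by (intro lext_eq_sum[OF fS]) (auto simp: S_def)
    then show "(\<Sum>z\<in>S. f x * g x z * h z y) = f x * lext h (g x) y"
      by (simp add: sum_distrib_left mult.assoc)
  qed
  finally show ?thesis .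
qed

lemma lext_kdelta_diff_sum:
  assumes "finite I"
  shows "lext g (\<lambda>z. \<Sum>i\<in>I. c1 i * kdelta (Y1 i) z - c2 i * kdelta (Y2 i) z) y
       = (\<Sum>i\<in>I. c1 i * g (Y1 i) y - c2 i * (g (Y2 i) y :: 'k::comm_ring_1))"
proof -
  let ?S = "Y1 ` I \<union> Y2 ` I"
  have fS: "finite ?S" using assms by auto
  have sub: "{z. (\<Sum>i\<in>I. c1 i * kdelta (Y1 i) z - c2 i * kdelta (Y2 i) z) \<noteq> (0::'k)} \<subseteq> ?S"
  proof
    fix z assume "z \<in> {z. (\<Sum>i\<in>I. c1 i * kdelta (Y1 i) z - c2 i * kdelta (Y2 i) z) \<noteq> (0::'k)}"
    then obtain i where "i \<in> I" "c1 i * kdelta (Y1 i) z - c2 i * kdelta (Y2 i) z \<noteq> (0::'k)"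
      by (metis (mono_tags, lifting) mem_Collect_eq sum.neutral)
    then show "z \<in> ?S" by (auto simp: kdelta_def split: if_splits)
  qed
  have "lext g (\<lambda>z. \<Sum>i\<in>I. c1 i * kdelta (Y1 i) z - c2 i * kdelta (Y2 i) z) y
     = (\<Sum>z\<in>?S. (\<Sum>i\<in>I. c1 i * kdelta (Y1 i) z - c2 i * kdelta (Y2 i) z) * g z y)"
    by (rule lext_eq_sum[OF fS sub])
  also have "\<dots> = (\<Sum>z\<in>?S. \<Sum>i\<in>I. c1 i * (kdelta (Y1 i) z * g z y) - c2 i * (kdelta (Y2 i) z * g z y))"
    by (simp add: sum_distrib_right left_diff_distrib mult.assoc)
  also have "\<dots> = (\<Sum>i\<in>I. \<Sum>z\<in>?S. c1 i * (kdelta (Y1 i) z * g z y) - c2 i * (kdelta (Y2 i) z * g z y))"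
    by (rule sum.swap)
  also have "\<dots> = (\<Sum>i\<in>I. c1 i * g (Y1 i) y - c2 i * g (Y2 i) y)"
  proof (rule sum.cong[OF refl])
    fix i assume "i \<in> I"
    then have "(\<Sum>z\<in>?S. kdelta (Y1 i) z * g z y) = g (Y1 i) y"
      and "(\<Sum>z\<in>?S. kdelta (Y2 i) z * g z y) = g (Y2 i) y"
      by (auto intro: sum_kdelta[OF fS])
    then show "(\<Sum>z\<in>?S. c1 i * (kdelta (Y1 i) z * g z y) - c2 i * (kdelta (Y2 i) z * g z y))
      = c1 i * g (Y1 i) y - c2 i * g (Y2 i) y"
      by (simp add: sum_subtractf flip: sum_distrib_left)
  qed
  finally show ?thesis .
qed

lemma lext_kdelta_double_sum:
  fixes c :: "'k::comm_ring_1"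
  assumes "finite A" "\<And>m. m \<in> A \<Longrightarrow> finite (B m)"
  shows "lext g (\<lambda>z. c * (\<Sum>m\<in>A. \<Sum>r\<in>B m. kdelta (Y m r) z)) y
       = c * (\<Sum>m\<in>A. \<Sum>r\<in>B m. g (Y m r) y)"
proof -
  let ?S = "(\<lambda>(m,r). Y m r) ` Sigma A B"
  have fS: "finite ?S" using assms by (intro finite_imageI finite_SigmaI) auto
  have Y_in: "Y m r \<in> ?S" if "m \<in> A" "r \<in> B m" for m r using that by force
  have sub: "{z. c * (\<Sum>m\<in>A. \<Sum>r\<in>B m. kdelta (Y m r) z) \<noteq> 0} \<subseteq> ?S"
  proof (rule subsetI, rule ccontr)
    fix z assume z: "z \<in> {z. c * (\<Sum>m\<in>A. \<Sum>r\<in>B m. kdelta (Y m r) z) \<noteq> 0}" "z \<notin> ?S"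
    then have "(\<Sum>m\<in>A. \<Sum>r\<in>B m. kdelta (Y m r) z :: 'k) = 0"
      using Y_in by (intro sum.neutral ballI) (auto simp: kdelta_def)
    then show False using z by simp
  qed
  have "lext g (\<lambda>z. c * (\<Sum>m\<in>A. \<Sum>r\<in>B m. kdelta (Y m r) z)) y
     = (\<Sum>z\<in>?S. c * (\<Sum>m\<in>A. \<Sum>r\<in>B m. kdelta (Y m r) z) * g z y)"
    by (rule lext_eq_sum[OF fS sub])
  also have "\<dots> = c * (\<Sum>z\<in>?S. \<Sum>m\<in>A. \<Sum>r\<in>B m. kdelta (Y m r) z * g z y)"
    by (simp add: sum_distrib_right sum_distrib_left mult.assoc)
  also have "\<dots> = c * (\<Sum>m\<in>A. \<Sum>z\<in>?S. \<Sum>r\<in>B m. kdelta (Y m r) z * g z y)"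
    by (subst sum.swap) (rule refl)
  also have "\<dots> = c * (\<Sum>m\<in>A. \<Sum>r\<in>B m. \<Sum>z\<in>?S. kdelta (Y m r) z * g z y)"
    by (subst (2) sum.swap) (rule refl)
  also have "\<dots> = c * (\<Sum>m\<in>A. \<Sum>r\<in>B m. g (Y m r) y)"
    by (simp add: sum_kdelta[OF fS Y_in])
  finally show ?thesis .
qed

lemma lext_rescale:
  assumes fin: "finite {x. f x \<noteq> 0}"
    and c: "\<And>x y. f x \<noteq> 0 \<Longrightarrow> g x y * w' y = w x * g1 x y"
  shows "lext g f y * w' y = (lext g1 (\<lambda>x. w x * f x) y :: 'k::comm_ring_1)"
proof -
  have "lext g f y * w' y = (\<Sum>x\<in>{x. f x \<noteq> 0}. (w x * f x) * g1 x y)"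
    unfolding lext_def sum_distrib_right
  proof (rule sum.cong[OF refl])
    fix x assume "x \<in> {x. f x \<noteq> 0}"
    then have "g x y * w' y = w x * g1 x y" by (simp add: c)
    then show "f x * g x y * w' y = w x * f x * g1 x y" by (metis mult.assoc mult.left_commute)
  qed
  also have "\<dots> = lext g1 (\<lambda>x. w x * f x) y"
    by (rule lext_eq_sum[symmetric, OF fin]) auto
  finally show ?thesis .
qed

text \<open>The smallest index that may be appended to the wedge \<open>J\<close> (the bound \<open>j\<^sub>p + 1\<close>,
  with \<open>j\<^sub>0 = 0\<close>).\<close>
definition next_slot :: "nat list \<Rightarrow> nat" where
  "next_slot J = (if J = [] then 0 else last J) + 1"

lemma length_remove_nth: "k < length J \<Longrightarrow> length (remove_nth k J) = length J - 1"
  unfolding remove_nth_def by simp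

lemma remove_nth_append: "k < length J \<Longrightarrow> remove_nth k (J @ [m]) = remove_nth k J @ [m]"
  unfolding remove_nth_def by simp

lemma remove_nth_last: "remove_nth (length J) (J @ [m]) = J"
  unfolding remove_nth_def by simp

lemma set_remove_nth:
  assumes "distinct J" "k < length J"
  shows "set (remove_nth k J) = set J - {J!k}"
proof -
  have J: "J = take k J @ J!k # drop (Suc k) J" using assms(2) by (simp add: id_take_nth_drop)
  then have "distinct (take k J @ J!k # drop (Suc k) J)" using assms(1) by simp
  moreover have "set J = set (take k J) \<union> {J!k} \<union> set (drop (Suc k) J)"
    using J by (metis Un_insert_right insert_is_Un list.simps(15) set_append sup_commute)
  ultimately show ?thesis unfolding remove_nth_def by auto
qed

lemma sorted_remove_nth: "sorted_wrt (<) (J::nat list) \<Longrightarrow> sorted_wrt (<) (remove_nth k J)"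
proof -
  assume s: "sorted_wrt (<) J"
  have "sorted_wrt (<) (take k J @ drop k J)" using s by simp
  then have "\<forall>x\<in>set (take k J). \<forall>y\<in>set (drop k J). x < y" unfolding sorted_wrt_append by blast
  moreover have "set (drop (Suc k) J) \<subseteq> set (drop k J)"
    using set_drop_subset[of 1 "drop k J"] by simp
  moreover have "sorted_wrt (<) (take k J)" "sorted_wrt (<) (drop (Suc k) J)"
    using s by (rule sorted_wrt_take, rule sorted_wrt_drop)
  ultimately show ?thesis unfolding remove_nth_def sorted_wrt_append by blast
qed

lemma sorted_butlast_less_last:
  assumes "sorted_wrt (<) J" "J \<noteq> []" "x \<in> set (butlast J)"
  shows "x < last J"
proof -
  have "sorted_wrt (<) (butlast J @ [last J])" using assms by simp
  then show ?thesis using assms(3) by (simp add: sorted_wrt_append)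
qed

lemma less_next_slot:
  assumes "sorted_wrt (<) J" "x \<in> set J" "next_slot J \<le> m"
  shows "x < m"
proof -
  have "J \<noteq> []" using assms(2) by auto
  then have "x \<in> set (butlast J @ [last J])" using assms(2) by simp
  then have "x \<in> set (butlast J) \<or> x = last J" by auto
  then have "x \<le> last J" using sorted_butlast_less_last[OF assms(1) \<open>J \<noteq> []\<close>] by fastforce
  then show ?thesis using assms(3) \<open>J \<noteq> []\<close> by (simp add: next_slot_def)
qed

lemma dbas_supp: "{z. dbas q N (a,J,b) z \<noteq> 0} \<subseteq>
   (\<lambda>k. (eadd a (eunit (J!k)), remove_nth k J, b)) ` {..<length J}
   \<union> (\<lambda>k. (a, remove_nth k J, eadd (eunit (J!k)) b)) ` {..<length J}"
proof (rule subsetI, rule ccontr)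
  fix z assume "z \<in> {z. dbas q N (a,J,b) z \<noteq> 0}"
    and "z \<notin> (\<lambda>k. (eadd a (eunit (J!k)), remove_nth k J, b)) ` {..<length J}
      \<union> (\<lambda>k. (a, remove_nth k J, eadd (eunit (J!k)) b)) ` {..<length J}"
  moreover from this(2) have "dbas q N (a,J,b) z = 0" unfolding dbas_def by (auto intro!: sum.neutral)
  ultimately show False by simp
qed

lemma tbas_supp: "{z. tbas q N (a,J,l) z \<noteq> 0} \<subseteq>
   (\<lambda>(m,r). (eadd a (uexp l m r), J @ [m], vexp l m r)) ` (SIGMA m:{next_slot J..N}. {1..l m})"
proof (rule subsetI, rule ccontr)
  fix z assume z: "z \<in> {z. tbas q N (a,J,l) z \<noteq> 0}"
    and nz: "z \<notin> (\<lambda>(m,r). (eadd a (uexp l m r), J @ [m], vexp l m r)) ` (SIGMA m:{next_slot J..N}. {1..l m})"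
  then have "\<And>m r. m \<in> {next_slot J..N} \<Longrightarrow> r \<in> {1..l m} \<Longrightarrow> z \<noteq> (eadd a (uexp l m r), J @ [m], vexp l m r)"
    by force
  then have "tbas q N (a,J,l) z = 0"
    unfolding tbas_def next_slot_def[symmetric] by (auto intro!: sum.neutral)
  then show False using z by simp
qed

lemma fin_dbas: "finite {z. dbas q N x z \<noteq> 0}"
  by (cases x) (auto intro: finite_subset[OF dbas_supp])

lemma fin_tbas: "finite {z. tbas q N x z \<noteq> 0}"
  by (cases x) (auto intro: finite_subset[OF tbas_supp])

lemma valid_eadd: "valid_exp N a \<Longrightarrow> valid_exp N b \<Longrightarrow> valid_exp N (eadd a b)"
  unfolding valid_exp_def eadd_def by auto

lemma valid_eunit: "j \<in> {1..N} \<Longrightarrow> valid_exp N (eunit j)"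
  unfolding valid_exp_def eunit_def by auto

lemma valid_dbas:
  assumes "valid_exp N a" "valid_wedge N p J" "valid_exp N b" "dbas q N (a,J,b) z \<noteq> 0"
  shows "case z of (a',J',b') \<Rightarrow> valid_exp N a' \<and> valid_wedge N (p - 1) J' \<and> valid_exp N b'"
proof -
  obtain k where k: "k < length J"
    and z: "z = (eadd a (eunit (J!k)), remove_nth k J, b) \<or> z = (a, remove_nth k J, eadd (eunit (J!k)) b)"
    using dbas_supp[of q N a J b] assms(4) by blast
  have jN: "J!k \<in> {1..N}" using assms(2) k unfolding valid_wedge_def by (meson nth_mem subsetD)
  have "set (remove_nth k J) \<subseteq> set J"
    unfolding remove_nth_def by (auto dest: in_set_takeD in_set_dropD)
  then have "valid_wedge N (p - 1) (remove_nth k J)"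
    using assms(2) k sorted_remove_nth unfolding valid_wedge_def by (auto simp: length_remove_nth)
  then show ?thesis using z assms(1,3) valid_eadd valid_eunit[OF jN] by auto
qed

lemma valid_tbas:
  assumes "valid_exp N a" "valid_wedge N p J" "valid_exp N l" "tbas q N (a,J,l) z \<noteq> 0"
  shows "case z of (a',J',b') \<Rightarrow> valid_exp N a' \<and> valid_wedge N (p + 1) J' \<and> valid_exp N b'"
proof -
  obtain m r where mr: "m \<in> {next_slot J..N}" "r \<in> {1..l m}"
    and z: "z = (eadd a (uexp l m r), J @ [m], vexp l m r)"
    using tbas_supp[of q N a J l] assms(4) by force
  have m1: "1 \<le> m" using mr by (simp add: next_slot_def)
  have Jm: "\<forall>x\<in>set J. x < m"
    using assms(2) mr less_next_slot unfolding valid_wedge_def by auto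
  have "valid_exp N (uexp l m r)" "valid_exp N (vexp l m r)"
    using assms(3) m1 mr unfolding valid_exp_def uexp_def vexp_def by auto
  moreover have "valid_wedge N (p + 1) (J @ [m])"
    using assms(2) Jm mr m1 unfolding valid_wedge_def by (auto simp: sorted_wrt_append)
  ultimately show ?thesis using z assms(1) valid_eadd by auto
qed

lemma inK_fin: "inK N p f \<Longrightarrow> finite {x. f x \<noteq> 0}"
  unfolding inK_def by simp

lemma inK_valid:
  "inK N p f \<Longrightarrow> f (a,J,b) \<noteq> 0 \<Longrightarrow> valid_exp N a \<and> valid_wedge N p J \<and> valid_exp N b"
  unfolding inK_def by blast

lemma inK_dK:
  assumes f: "inK N p f"
  shows "inK N (p - 1) (dK q N f)"
  unfolding inK_def
proof (rule conjI)
  show "finite {x. dK q N f x \<noteq> 0}"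
    unfolding dK_def by (rule lext_fin[OF inK_fin[OF f] fin_dbas])
  show "\<forall>a' J' b'. dK q N f (a', J', b') \<noteq> 0 \<longrightarrow>
      valid_exp N a' \<and> valid_wedge N (p - 1) J' \<and> valid_exp N b'"
  proof (intro allI impI)
    fix a' J' b' assume "dK q N f (a', J', b') \<noteq> 0"
    then obtain x where x: "f x \<noteq> 0" "dbas q N x (a',J',b') \<noteq> 0"
      using lext_supp[of "dbas q N" f] unfolding dK_def by blast
    obtain a J b where xe: "x = (a,J,b)" by (cases x) auto
    show "valid_exp N a' \<and> valid_wedge N (p - 1) J' \<and> valid_exp N b'"
      using valid_dbas[of N a p J b q "(a',J',b')"] inK_valid[OF f] x unfolding xe by simp
  qed
qed

lemma inK_tK:
  assumes f: "inK N p f"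
  shows "inK N (p + 1) (tK q N f)"
  unfolding inK_def
proof (rule conjI)
  show "finite {x. tK q N f x \<noteq> 0}"
    unfolding tK_def by (rule lext_fin[OF inK_fin[OF f] fin_tbas])
  show "\<forall>a' J' b'. tK q N f (a', J', b') \<noteq> 0 \<longrightarrow>
      valid_exp N a' \<and> valid_wedge N (p + 1) J' \<and> valid_exp N b'"
  proof (intro allI impI)
    fix a' J' b' assume "tK q N f (a', J', b') \<noteq> 0"
    then obtain x where x: "f x \<noteq> 0" "tbas q N x (a',J',b') \<noteq> 0"
      using lext_supp[of "tbas q N" f] unfolding tK_def by blast
    obtain a J b where xe: "x = (a,J,b)" by (cases x) auto
    show "valid_exp N a' \<and> valid_wedge N (p + 1) J' \<and> valid_exp N b'"
      using valid_tbas[of N a p J b q "(a',J',b')"] inK_valid[OF f] x unfolding xe by simp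
  qed
qed

abbreviation qone :: "nat \<Rightarrow> nat \<Rightarrow> 'k::comm_ring_1" where
  "qone \<equiv> \<lambda>_ _. 1"

lemma mcoef_qone [simp]: "mcoef qone N a b = (1::'k::comm_ring_1)"
  unfolding mcoef_def by (simp cong: if_cong)

lemma lam_qone [simp]: "lam qone N l J m r = (1::'k::comm_ring_1)"
  unfolding lam_def by simp

definition face :: "expv \<Rightarrow> nat list \<Rightarrow> nat \<Rightarrow> expv \<Rightarrow> kbas \<Rightarrow> 'k::comm_ring_1" where
  "face a J j b y = kdelta (eadd a (eunit j), J, b) y - kdelta (a, J, eadd (eunit j) b) y"

lemma dbas_qone:
  "dbas qone N (a,J,b) y = (\<Sum>k<length J. (-1)^k * face a (remove_nth k J) (J!k) b y)"
  unfolding dbas_def face_def kdelta_def by (auto intro!: sum.cong)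

lemma dbas_qone_snoc:
  "dbas qone N (a, J @ [m], b) y =
     (\<Sum>k<length J. (-1)^k * face a (remove_nth k J @ [m]) (J!k) b y) + (-1)^length J * face a J m b y"
proof -
  have "dbas qone N (a, J @ [m], b) y
      = (\<Sum>k<length J. (-1)^k * face a (remove_nth k (J @ [m])) ((J @ [m])!k) b y)
        + (-1)^length J * face a J m b y"
    by (simp add: dbas_qone remove_nth_last)
  also have "(\<Sum>k<length J. (-1)^k * face a (remove_nth k (J @ [m])) ((J @ [m])!k) b y)
      = (\<Sum>k<length J. (-1)^k * face a (remove_nth k J @ [m]) (J!k) b y)"
    by (rule sum.cong) (simp_all add: nth_append remove_nth_append)
  finally show ?thesis .
qed

lemma tbas_qone: "tbas qone N (a,J,l) y = (-1)^(length J + 1) *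
    (\<Sum>m\<in>{next_slot J..N}. \<Sum>r\<in>{1..l m}. kdelta (eadd a (uexp l m r), J @ [m], vexp l m r) y)"
  unfolding tbas_def kdelta_def next_slot_def by (auto intro!: sum.cong cong: if_cong)

text \<open>\<open>x\<^sup>a x\<^sub>m\<^sup>l\<^sup>m \<dots> x\<^sub>N\<^sup>l\<^sup>N \<otimes> J \<otimes> x\<^sub>1\<^sup>l\<^sup>1 \<dots> x\<^sub>m\<^sub>-\<^sub>1\<^sup>l\<^sup>m\<^sup>-\<^sup>1\<close>: the monomial \<open>x\<^sup>l\<close> split at position \<open>m\<close>.\<close>
definition split_bas :: "expv \<Rightarrow> nat list \<Rightarrow> expv \<Rightarrow> nat \<Rightarrow> kbas \<Rightarrow> 'k::comm_ring_1" where
  "split_bas a J l m y = kdelta (eadd a (uexp l m 0), J, vexp l m 1) y"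

lemma split_bas_end:
  assumes "valid_exp N l"
  shows "split_bas a J l (Suc N) y = kdelta (a,J,l) y"
proof -
  have v: "l i = 0" if "i = 0 \<or> i > N" for i using assms that unfolding valid_exp_def by fastforce
  have "eadd a (uexp l (Suc N) 0) = a"
    by (rule ext) (auto simp: eadd_def uexp_def intro: v)
  moreover have "vexp l (Suc N) 1 = l"
    by (rule ext) (auto simp: vexp_def v)
  ultimately show ?thesis unfolding split_bas_def by simp
qed

text \<open>Moving the factors \<open>x\<^sub>m\<close> of \<open>x\<^sup>l\<close> one by one across the tensor sign telescopes.\<close>
lemma face_telescope:
  "(\<Sum>r\<in>{1..l m}. face (eadd a (uexp l m r)) J m (vexp l m r) y)
   = split_bas a J l m y - (split_bas a J l (Suc m) y :: 'k::comm_ring_1)"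
proof -
  define H :: "nat \<Rightarrow> 'k" where "H r = kdelta (eadd a (uexp l m r), J, vexp l m (Suc r)) y" for r
  have e1: "eadd (eadd a (uexp l m (Suc r))) (eunit m) = eadd a (uexp l m r)" if "r < l m" for r
    using that by (auto simp: eadd_def uexp_def eunit_def fun_eq_iff)
  have e2: "eadd (eunit m) (vexp l m (Suc r)) = vexp l m (Suc (Suc r))" for r
    by (auto simp: eadd_def vexp_def eunit_def)
  have "(\<Sum>r\<in>{1..l m}. face (eadd a (uexp l m r)) J m (vexp l m r) y)
      = (\<Sum>r<l m. face (eadd a (uexp l m (Suc r))) J m (vexp l m (Suc r)) y)"
    using sum.atLeast1_atMost_eq[of "\<lambda>r. face (eadd a (uexp l m r)) J m (vexp l m r) y"] by simp
  also have "\<dots> = (\<Sum>r<l m. H r - H (Suc r))"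
    unfolding H_def face_def by (rule sum.cong) (auto simp: e1 e2)
  also have "\<dots> = H 0 - H (l m)" by (rule sum_lessThan_telescope')
  also have "H 0 = split_bas a J l m y" unfolding H_def split_bas_def by simp
  also have "H (l m) = split_bas a J l (Suc m) y"
  proof -
    have "uexp l m (l m) = uexp l (Suc m) 0" by (auto simp: uexp_def)
    moreover have "vexp l m (Suc (l m)) = vexp l (Suc m) 1"
      by (rule ext) (auto simp: vexp_def less_Suc_eq)
    ultimately show ?thesis unfolding H_def split_bas_def by simp
  qed
  finally show ?thesis .
qed

lemma sum_telescope_ivl:
  "s \<le> Suc N \<Longrightarrow> (\<Sum>m\<in>{s..N}. f m - f (Suc m)) = f s - (f (Suc N) :: 'a::ab_group_add)"
proof -
  assume "s \<le> Suc N"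
  have "(\<Sum>m\<in>{s..N}. f m - f (Suc m)) = - (\<Sum>m\<in>{s..N}. f (Suc m) - f m)"
    by (simp add: sum_negf[symmetric])
  then show ?thesis using sum_Suc_diff[OF \<open>s \<le> Suc N\<close>, of f] by simp
qed

text \<open>The terms of \<open>d t\<close> in which the face removes the \<open>k\<close>-th entry of \<open>J\<close>
  (and not the newly appended index \<open>m\<close>).\<close>
definition dt_term :: "expv \<Rightarrow> nat list \<Rightarrow> expv \<Rightarrow> nat \<Rightarrow> nat \<Rightarrow> kbas \<Rightarrow> 'k::comm_ring_1" where
  "dt_term a J l k m y =
     (\<Sum>r\<in>{1..l m}. face (eadd a (uexp l m r)) (remove_nth k J @ [m]) (J!k) (vexp l m r) y)"

text \<open>The terms of \<open>t d\<close> coming from the \<open>k\<close>-th face of \<open>d\<close> and the index \<open>m\<close> of \<open>t\<close>.\<close>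
definition td_term :: "expv \<Rightarrow> nat list \<Rightarrow> expv \<Rightarrow> nat \<Rightarrow> nat \<Rightarrow> kbas \<Rightarrow> 'k::comm_ring_1" where
  "td_term a J l k m y =
     (\<Sum>r\<in>{1..l m}. kdelta (eadd (eadd a (eunit (J!k))) (uexp l m r), remove_nth k J @ [m], vexp l m r) y)
   - (\<Sum>r\<in>{1..(eadd (eunit (J!k)) l) m}. kdelta (eadd a (uexp (eadd (eunit (J!k)) l) m r),
        remove_nth k J @ [m], vexp (eadd (eunit (J!k)) l) m r) y)"

lemma dK_tbas_qone:
  assumes "next_slot J \<le> Suc N"
  shows "dK qone N (tbas qone N (a,J,l)) y = (-1)^(length J + 1) *
     ((\<Sum>k<length J. (-1)^k * (\<Sum>m\<in>{next_slot J..N}. dt_term a J l k m y))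
      + (-1)^length J * (split_bas a J l (next_slot J) y - (split_bas a J l (Suc N) y :: 'k::comm_ring_1)))"
proof -
  let ?p = "length J" and ?M = "{next_slot J..N}"
  let ?u = "\<lambda>m r. eadd a (uexp l m r)" and ?v = "vexp l"
  have "dK qone N (tbas qone N (a,J,l)) y
      = (-1)^(?p+1) * (\<Sum>m\<in>?M. \<Sum>r\<in>{1..l m}. dbas qone N (?u m r, J @ [m], ?v m r) y)"
    unfolding dK_def tbas_qone[abs_def] by (rule lext_kdelta_double_sum) auto
  also have "(\<Sum>m\<in>?M. \<Sum>r\<in>{1..l m}. dbas qone N (?u m r, J @ [m], ?v m r) y)
      = (\<Sum>m\<in>?M. \<Sum>r\<in>{1..l m}. \<Sum>k<?p. (-1)^k * face (?u m r) (remove_nth k J @ [m]) (J!k) (?v m r) y)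
        + (-1)^?p * (\<Sum>m\<in>?M. \<Sum>r\<in>{1..l m}. face (?u m r) J m (?v m r) y)"
    by (simp add: dbas_qone_snoc sum.distrib sum_distrib_left)
  also have "(\<Sum>m\<in>?M. \<Sum>r\<in>{1..l m}. \<Sum>k<?p. (-1)^k * face (?u m r) (remove_nth k J @ [m]) (J!k) (?v m r) y)
      = (\<Sum>k<?p. (-1)^k * (\<Sum>m\<in>?M. dt_term a J l k m y))"
    unfolding dt_term_def sum_distrib_left
    by (subst sum.swap, rule sum.cong[OF refl], subst sum.swap) (rule refl)
  also have "(\<Sum>m\<in>?M. \<Sum>r\<in>{1..l m}. face (?u m r) J m (?v m r) y)
      = split_bas a J l (next_slot J) y - split_bas a J l (Suc N) y"
    unfolding face_telescope using assms by (rule sum_telescope_ivl)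
  finally show ?thesis .
qed

lemma tK_dbas_qone:
  assumes "length J \<ge> 1"
  shows "tK qone N (dbas qone N (a,J,l)) y =
    (\<Sum>k<length J. (-1)^k * ((-1)^length J *
       (\<Sum>m\<in>{next_slot (remove_nth k J)..N}. (td_term a J l k m y :: 'k::comm_ring_1))))"
proof -
  have deq: "dbas qone N (a,J,l) = (\<lambda>z. \<Sum>k<length J.
      (-1)^k * kdelta (eadd a (eunit (J!k)), remove_nth k J, l) z
    - (-1)^k * kdelta (a, remove_nth k J, eadd (eunit (J!k)) l) z)"
    by (rule ext) (simp add: dbas_qone face_def right_diff_distrib)
  have "tK qone N (dbas qone N (a,J,l)) y = (\<Sum>k<length J.
      (-1)^k * tbas qone N (eadd a (eunit (J!k)), remove_nth k J, l) y
    - (-1)^k * tbas qone N (a, remove_nth k J, eadd (eunit (J!k)) l) y)"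
    unfolding tK_def deq by (rule lext_kdelta_diff_sum) simp
  also have "\<dots> = (\<Sum>k<length J. (-1)^k * ((-1)^length J *
       (\<Sum>m\<in>{next_slot (remove_nth k J)..N}. td_term a J l k m y)))"
  proof (rule sum.cong[OF refl])
    fix k assume "k \<in> {..<length J}"
    then have "length (remove_nth k J) + 1 = length J" by (simp add: length_remove_nth)
    then show "(-1)^k * tbas qone N (eadd a (eunit (J!k)), remove_nth k J, l) y
      - (-1)^k * tbas qone N (a, remove_nth k J, eadd (eunit (J!k)) l) y
      = (-1)^k * ((-1)^length J * (\<Sum>m\<in>{next_slot (remove_nth k J)..N}. td_term a J l k m y))"
      unfolding tbas_qone td_term_def by (simp add: sum_subtractf right_diff_distrib)
  qed
  finally show ?thesis .
qed

lemma td_term_above: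
  assumes "J!k < m"
  shows "td_term a J l k m y = dt_term a J l k m y"
proof -
  have h1: "(eadd (eunit (J!k)) l) m = l m" using assms by (simp add: eadd_def eunit_def)
  have h2: "\<And>r. uexp (eadd (eunit (J!k)) l) m r = uexp l m r"
    using assms by (auto simp: uexp_def eadd_def eunit_def fun_eq_iff)
  have h3: "\<And>r. vexp (eadd (eunit (J!k)) l) m r = eadd (eunit (J!k)) (vexp l m r)"
    using assms by (auto simp: vexp_def eadd_def eunit_def fun_eq_iff)
  have h4: "\<And>r. eadd (eadd a (eunit (J!k))) (uexp l m r) = eadd (eadd a (uexp l m r)) (eunit (J!k))"
    by (auto simp: eadd_def fun_eq_iff)
  show ?thesis unfolding td_term_def dt_term_def face_def h1 h2 h3 h4 by (simp add: sum_subtractf)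
qed

lemma td_term_below:
  assumes "m < J!k"
  shows "td_term a J l k m y = 0"
proof -
  have h1: "(eadd (eunit (J!k)) l) m = l m" using assms by (simp add: eadd_def eunit_def)
  have h2: "\<And>r. uexp (eadd (eunit (J!k)) l) m r = eadd (eunit (J!k)) (uexp l m r)"
    using assms by (auto simp: uexp_def eadd_def eunit_def fun_eq_iff)
  have h3: "\<And>r. vexp (eadd (eunit (J!k)) l) m r = vexp l m r"
    using assms by (auto simp: vexp_def eadd_def eunit_def fun_eq_iff)
  have h4: "\<And>r. eadd (eadd a (eunit (J!k))) (uexp l m r) = eadd a (eadd (eunit (J!k)) (uexp l m r))"
    by (auto simp: eadd_def fun_eq_iff)
  show ?thesis unfolding td_term_def h1 h2 h3 h4 by simp
qed

text \<open>At \<open>m = J!k\<close> everything cancels except one extra term, which puts \<open>x\<^sub>m\<close> back into the wedge.\<close>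
lemma td_term_at:
  "td_term a J l k (J!k) y = - (split_bas a (remove_nth k J @ [J!k]) l (Suc (J!k)) y :: 'k::comm_ring_1)"
proof -
  define m where "m = J!k"
  define L where "L = eadd (eunit m) l"
  define F :: "nat \<Rightarrow> 'k" where "F r = kdelta (eadd a (uexp L m r), remove_nth k J @ [m], vexp L m r) y" for r
  have L_m: "L m = Suc (l m)" by (simp add: L_def eadd_def eunit_def)
  have "F r = kdelta (eadd (eadd a (eunit m)) (uexp l m r), remove_nth k J @ [m], vexp l m r) y"
    if "r \<in> {1..l m}" for r
  proof -
    have "eadd a (uexp L m r) = eadd (eadd a (eunit m)) (uexp l m r)"
      using that by (auto simp: L_def uexp_def eadd_def eunit_def fun_eq_iff)
    moreover have "vexp L m r = vexp l m r"
      by (auto simp: L_def vexp_def eadd_def eunit_def fun_eq_iff)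
    ultimately show ?thesis unfolding F_def by simp
  qed
  moreover have "F (Suc (l m)) = split_bas a (remove_nth k J @ [m]) l (Suc m) y"
  proof -
    have "uexp L m (Suc (l m)) = uexp l (Suc m) 0"
      by (auto simp: L_def uexp_def eadd_def eunit_def fun_eq_iff)
    moreover have "vexp L m (Suc (l m)) = vexp l (Suc m) 1"
      by (rule ext) (auto simp: L_def vexp_def eadd_def eunit_def less_Suc_eq)
    ultimately show ?thesis unfolding F_def split_bas_def by simp
  qed
  ultimately have "(\<Sum>r\<in>{1..L m}. F r) = (\<Sum>r\<in>{1..l m}.
      kdelta (eadd (eadd a (eunit m)) (uexp l m r), remove_nth k J @ [m], vexp l m r) y)
      + split_bas a (remove_nth k J @ [m]) l (Suc m) y"
    unfolding L_m by (simp add: atLeastAtMostSuc_conv add.commute)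
  then show ?thesis unfolding td_term_def m_def[symmetric] L_def[symmetric] F_def by simp
qed

lemma next_slot_remove_nth_inner:
  "Suc k < length J \<Longrightarrow> next_slot (remove_nth k J) = next_slot J"
  unfolding next_slot_def remove_nth_def by (auto simp: last_append)

lemma next_slot_butlast:
  assumes "sorted_wrt (<) J" "J \<noteq> []" "last J \<ge> 1"
  shows "next_slot (butlast J) \<le> last J"
  using assms sorted_butlast_less_last[OF assms(1,2) last_in_set]
  by (cases "butlast J = []") (auto simp: next_slot_def)

lemma next_slot_le:
  assumes "set J \<subseteq> {1..N}"
  shows "next_slot J \<le> Suc N"
proof (cases "J = []")
  case False
  then have "last J \<in> {1..N}" using assms last_in_set by blast
  then show ?thesis by (simp add: next_slot_def)
qed (simp add: next_slot_def)

lemma remove_last_entry: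
  assumes J: "sorted_wrt (<) J" "set J \<subseteq> {1..N}" and k: "k < length J" "k = length J - 1"
  shows "remove_nth k J @ [J!k] = J" "next_slot (remove_nth k J) \<le> J!k" "next_slot J = Suc (J!k)"
proof -
  have Jne: "J \<noteq> []" using k by auto
  have rm: "remove_nth k J = butlast J" using k by (simp add: remove_nth_def butlast_conv_take)
  have jk: "J!k = last J" using Jne k by (simp add: last_conv_nth)
  have "last J \<in> {1..N}" using J(2) Jne last_in_set by blast
  then show "remove_nth k J @ [J!k] = J" "next_slot (remove_nth k J) \<le> J!k" "next_slot J = Suc (J!k)"
    unfolding rm jk using next_slot_butlast[OF J(1) Jne] Jne by (simp_all add: next_slot_def)
qed

lemma next_slot_remove_nth_le:
  assumes J: "sorted_wrt (<) J" "set J \<subseteq> {1..N}" and k: "k < length J"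
  shows "next_slot (remove_nth k J) \<le> next_slot J"
  using remove_last_entry[OF J k] k by (cases "k = length J - 1") (auto simp: next_slot_remove_nth_inner)

lemma td_term_gap:
  assumes J: "sorted_wrt (<) J" "set J \<subseteq> {1..N}" and k: "k < length J"
  shows "(\<Sum>m\<in>{next_slot (remove_nth k J)..<next_slot J}. td_term a J l k m y)
       = (if k = length J - 1 then - split_bas a J l (next_slot J) y else (0::'k::comm_ring_1))"
proof (cases "k = length J - 1")
  case False
  then show ?thesis using k by (simp add: next_slot_remove_nth_inner)
next
  case True
  note last = remove_last_entry[OF J k True]
  have "(\<Sum>m\<in>{next_slot (remove_nth k J)..<next_slot J}. td_term a J l k m y)
      = (\<Sum>m\<in>{next_slot (remove_nth k J)..<J!k}. td_term a J l k m y) + td_term a J l k (J!k) y"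
    unfolding last(3) by (rule sum.atLeastLessThan_Suc[OF last(2)])
  also have "(\<Sum>m\<in>{next_slot (remove_nth k J)..<J!k}. td_term a J l k m y) = 0"
    by (rule sum.neutral) (auto intro: td_term_below)
  also have "td_term a J l k (J!k) y = - split_bas a J l (next_slot J) y"
    using last by (simp add: td_term_at)
  finally show ?thesis using True by simp
qed

lemma td_term_sum:
  assumes J: "sorted_wrt (<) J" "set J \<subseteq> {1..N}" and k: "k < length J"
  shows "(\<Sum>m\<in>{next_slot (remove_nth k J)..N}. td_term a J l k m y)
       = (if k = length J - 1 then - split_bas a J l (next_slot J) y else 0)
         + (\<Sum>m\<in>{next_slot J..N}. (dt_term a J l k m y :: 'k::comm_ring_1))"
proof -
  let ?s = "next_slot (remove_nth k J)"
  have "{?s..N} = {?s..<next_slot J} \<union> {next_slot J..N}"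
    using next_slot_remove_nth_le[OF J k] next_slot_le[OF J(2)] by auto
  then have "(\<Sum>m\<in>{?s..N}. td_term a J l k m y)
      = (\<Sum>m\<in>{?s..<next_slot J}. td_term a J l k m y) + (\<Sum>m\<in>{next_slot J..N}. td_term a J l k m y)"
    by (simp add: sum.union_disjoint ivl_disj_int)
  also have "(\<Sum>m\<in>{next_slot J..N}. td_term a J l k m y) = (\<Sum>m\<in>{next_slot J..N}. dt_term a J l k m y)"
    using less_next_slot[OF J(1) nth_mem[OF k]] by (intro sum.cong refl td_term_above) auto
  finally show ?thesis unfolding td_term_gap[OF J k] .
qed

lemma homotopy_bas_qone:
  assumes J: "sorted_wrt (<) J" "set J \<subseteq> {1..N}" "length J \<ge> 1" and l: "valid_exp N l"
  shows "tK qone N (dbas qone N (a,J,l)) y + dK qone N (tbas qone N (a,J,l)) y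
       = (kdelta (a,J,l) y :: 'k::comm_ring_1)"
proof -
  let ?p = "length J"
  define G :: 'k where "G = split_bas a J l (next_slot J) y"
  define S :: "nat \<Rightarrow> 'k" where "S k = (\<Sum>m\<in>{next_slot J..N}. dt_term a J l k m y)" for k
  have slot_N: "next_slot J \<le> Suc N" using next_slot_le[OF J(2)] .
  have sq: "(-1::'k)^?p * (-1)^?p = 1" by (simp flip: power_add)
  have "tK qone N (dbas qone N (a,J,l)) y
      = (\<Sum>k<?p. (-1)^k * ((-1)^?p * ((if k = ?p - 1 then - G else 0) + S k)))"
    unfolding tK_dbas_qone[OF J(3)] G_def S_def by (intro sum.cong refl) (simp add: td_term_sum[OF J(1,2)])
  also have "\<dots> = (\<Sum>k<?p. (-1)^k * ((-1)^?p * (if k = ?p - 1 then - G else 0)))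
      + (-1)^?p * (\<Sum>k<?p. (-1)^k * S k)"
    by (simp add: sum.distrib sum_distrib_left distrib_left mult.left_commute)
  also have "(\<Sum>k<?p. (-1)^k * ((-1)^?p * (if k = ?p - 1 then - G else 0))) = (-1)^(?p - 1) * ((-1)^?p * - G)"
    using J(3) by (simp add: if_distrib[of "\<lambda>x. _ * x"] sum.delta' cong: if_cong) linarith
  also have "\<dots> = G"
    using J(3) sq by (cases ?p) auto
  finally have td: "tK qone N (dbas qone N (a,J,l)) y = G + (-1)^?p * (\<Sum>k<?p. (-1)^k * S k)" .
  have dt: "dK qone N (tbas qone N (a,J,l)) y
      = (-1)^(?p + 1) * ((\<Sum>k<?p. (-1)^k * S k) + (-1)^?p * (G - kdelta (a,J,l) y))"
    unfolding dK_tbas_qone[OF slot_N] split_bas_end[OF l] S_def G_def ..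
  show ?thesis unfolding td dt using sq by (simp add: algebra_simps)
qed

lemma homotopy_bas_qone_zero:
  assumes l: "valid_exp N l"
  shows "tm1 (kdelta (eadd a l)) y + dK qone N (tbas qone N (a,[],l)) y = (kdelta (a,[],l) y :: 'k::comm_ring_1)"
proof -
  have l0: "l 0 = 0" using l unfolding valid_exp_def by fastforce
  have "tm1 (kdelta (eadd a l)) y = (kdelta (eadd a l, [], ezero) y :: 'k)"
    unfolding tm1_def lext_single by (simp add: kdelta_def)
  moreover have "split_bas a [] l (next_slot []) y = (kdelta (eadd a l, [], ezero) y :: 'k)"
  proof -
    have "uexp l 1 0 = l" by (rule ext) (auto simp: uexp_def l0)
    moreover have "vexp l 1 1 = ezero" by (rule ext) (auto simp: vexp_def ezero_def l0)
    ultimately show ?thesis by (simp add: split_bas_def next_slot_def)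
  qed
  moreover have "dK qone N (tbas qone N (a,[],l)) y
      = - (split_bas a [] l (next_slot []) y - (split_bas a [] l (Suc N) y :: 'k))"
    by (simp add: dK_tbas_qone next_slot_def)
  ultimately show ?thesis using split_bas_end[OF l] by simp
qed

lemma contraction_qone:
  assumes f: "inK N p f" and p: "p \<ge> 1"
  shows "(\<lambda>y. tK qone N (dK qone N f) y + dK qone N (tK qone N f) y) = (f :: kbas \<Rightarrow> 'k::comm_ring_1)"
proof -
  have fin: "finite {x. f x \<noteq> 0}" by (rule inK_fin[OF f])
  have "tK qone N (dK qone N f) y + dK qone N (tK qone N f) y
      = (\<Sum>x\<in>{x. f x \<noteq> 0}. f x * (tK qone N (dbas qone N x) y + dK qone N (tbas qone N x) y))" for y
    unfolding tK_def dK_def lext_comp[OF fin fin_dbas] lext_comp[OF fin fin_tbas]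
    by (simp add: sum.distrib distrib_left)
  also have "\<dots> y = lext kdelta f y" for y
    unfolding lext_def
  proof (rule sum.cong[OF refl])
    fix x assume x: "x \<in> {x. f x \<noteq> 0}"
    obtain a J b where xe: "x = (a,J,b)" by (cases x) auto
    have "valid_exp N a \<and> valid_wedge N p J \<and> valid_exp N b" using inK_valid[OF f] x xe by simp
    then show "f x * (tK qone N (dbas qone N x) y + dK qone N (tbas qone N x) y) = f x * kdelta x y"
      unfolding xe using p by (subst homotopy_bas_qone) (auto simp: valid_wedge_def)
  qed
  finally show ?thesis using lext_kdelta[OF fin] by (auto simp: fun_eq_iff)
qed

lemma contraction_qone_zero:
  assumes f: "inK N 0 f"
  shows "(\<lambda>y. tm1 (d0 qone N f) y + dK qone N (tK qone N f) y) = (f :: kbas \<Rightarrow> 'k::comm_ring_1)"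
proof -
  have fin: "finite {x. f x \<noteq> 0}" by (rule inK_fin[OF f])
  have d0_bas: "(\<lambda>(a, J, b) y. if y = eadd a b then mcoef qone N a b else 0)
      = (\<lambda>(a, J, b). kdelta (eadd a b) :: expv \<Rightarrow> 'k)"
    by (auto simp: kdelta_def fun_eq_iff)
  have fin_d0: "finite {z. (case x of (a, J, b) \<Rightarrow> kdelta (eadd a b)) z \<noteq> (0::'k)}" for x :: kbas
    by (cases x) (auto simp: kdelta_def)
  have "tm1 (d0 qone N f) y + dK qone N (tK qone N f) y
      = (\<Sum>x\<in>{x. f x \<noteq> 0}. f x * (tm1 (case x of (a, J, b) \<Rightarrow> kdelta (eadd a b)) y
                                  + dK qone N (tbas qone N x) y))" for y
    unfolding tm1_def d0_def d0_bas tK_def dK_def lext_comp[OF fin fin_d0] lext_comp[OF fin fin_tbas]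
    by (simp add: sum.distrib distrib_left)
  also have "\<dots> y = lext kdelta f y" for y
    unfolding lext_def
  proof (rule sum.cong[OF refl])
    fix x assume x: "x \<in> {x. f x \<noteq> 0}"
    obtain a J b where xe: "x = (a,J,b)" by (cases x) auto
    have "valid_wedge N 0 J" "valid_exp N b" using inK_valid[OF f] x xe by auto
    then have "J = []" "valid_exp N b" by (auto simp: valid_wedge_def)
    then show "f x * (tm1 (case x of (a, J, b) \<Rightarrow> kdelta (eadd a b)) y + dK qone N (tbas qone N x) y)
        = f x * kdelta x y"
      unfolding xe by (simp add: homotopy_bas_qone_zero)
  qed
  finally show ?thesis using lext_kdelta[OF fin] by (auto simp: fun_eq_iff)
qed

definition qpow :: "(nat \<Rightarrow> nat \<Rightarrow> 'k::comm_ring_1) \<Rightarrow> nat \<Rightarrow> (nat \<Rightarrow> nat \<Rightarrow> nat) \<Rightarrow> 'k" where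
  "qpow q N e = (\<Prod>s\<in>{1..N}. \<Prod>t\<in>{1..N}. q s t ^ e s t)"

lemma qpow_add: "qpow q N (\<lambda>s t. e1 s t + e2 s t) = qpow q N e1 * qpow q N e2"
  unfolding qpow_def by (simp add: power_add prod.distrib)

lemma qpow_cong:
  "(\<And>s t. s \<in> {1..N} \<Longrightarrow> t \<in> {1..N} \<Longrightarrow> e1 s t = e2 s t) \<Longrightarrow> qpow q N e1 = qpow q N e2"
  unfolding qpow_def by (intro prod.cong refl) auto

lemma qpow_block:
  assumes "A \<subseteq> {1..N}" "B \<subseteq> {1..N}"
  shows "(\<Prod>s\<in>A. \<Prod>t\<in>B. q s t ^ h s t) = qpow q N (\<lambda>s t. if s \<in> A \<and> t \<in> B then h s t else 0)"
proof -
  have "(\<Prod>t\<in>{1..N}. q s t ^ (if s \<in> A \<and> t \<in> B then h s t else 0)) = (\<Prod>t\<in>B. q s t ^ h s t)"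
    if "s \<in> A" for s
    using assms that by (intro prod.mono_neutral_cong_right) auto
  moreover have "qpow q N (\<lambda>s t. if s \<in> A \<and> t \<in> B then h s t else 0)
      = (\<Prod>s\<in>A. \<Prod>t\<in>{1..N}. q s t ^ (if s \<in> A \<and> t \<in> B then h s t else 0))"
    unfolding qpow_def using assms by (intro prod.mono_neutral_cong_right) auto
  ultimately show ?thesis by simp
qed

definition mcoef_exps :: "expv \<Rightarrow> expv \<Rightarrow> nat \<Rightarrow> nat \<Rightarrow> nat" where
  "mcoef_exps a b = (\<lambda>s t. if t < s then a s * b t else 0)"

lemma mcoef_qpow: "mcoef q N a b = qpow q N (mcoef_exps a b)"
  unfolding mcoef_def qpow_def mcoef_exps_def by (intro prod.cong refl) auto

lemma mcoef_zero_right: "mcoef q N a ezero = 1"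
  unfolding mcoef_def ezero_def by (simp cong: if_cong)

lemma mcoef_zero_left: "mcoef q N ezero b = 1"
  unfolding mcoef_def ezero_def by (simp cong: if_cong)

locale qparams =
  fixes q :: "nat \<Rightarrow> nat \<Rightarrow> 'k::field" and N :: nat
  assumes q_nonzero: "\<And>i j. i \<in> {1..N} \<Longrightarrow> j \<in> {1..N} \<Longrightarrow> q i j \<noteq> 0"
    and q_diag: "\<And>i. i \<in> {1..N} \<Longrightarrow> q i i = 1"
    and q_inverse: "\<And>i j. i \<in> {1..N} \<Longrightarrow> j \<in> {1..N} \<Longrightarrow> q j i = inverse (q i j)"
begin

lemma qpow_nonzero: "qpow q N e \<noteq> 0"
  unfolding qpow_def by (auto simp: q_nonzero)

lemma mcoef_nonzero: "mcoef q N a b \<noteq> 0"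
  unfolding mcoef_qpow by (rule qpow_nonzero)

lemma qpow_diag: "qpow q N (\<lambda>s t. if s = t then e s t else 0) = 1"
  unfolding qpow_def by (intro prod.neutral ballI) (auto simp: q_diag)

lemma qpow_transpose:
  "qpow q N (\<lambda>s t. if t < s then e s t else 0) * qpow q N (\<lambda>s t. if s < t then e t s else 0) = 1"
proof -
  have "qpow q N (\<lambda>s t. if s < t then e t s else 0)
      = (\<Prod>s\<in>{1..N}. \<Prod>t\<in>{1..N}. q t s ^ (if t < s then e s t else 0))"
    unfolding qpow_def by (rule prod.swap)
  then have "qpow q N (\<lambda>s t. if t < s then e s t else 0) * qpow q N (\<lambda>s t. if s < t then e t s else 0)
      = (\<Prod>s\<in>{1..N}. \<Prod>t\<in>{1..N}. (q s t * q t s) ^ (if t < s then e s t else 0))"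
    unfolding qpow_def by (simp add: prod.distrib power_mult_distrib)
  also have "\<dots> = 1"
  proof (intro prod.neutral ballI)
    fix s t assume s: "s \<in> {1..N}" and t: "t \<in> {1..N}"
    have "q s t * q t s = 1" using q_inverse[OF s t] q_nonzero[OF s t] by simp
    then show "(q s t * q t s) ^ (if t < s then e s t else 0) = 1" by simp
  qed
  finally show ?thesis .
qed

lemma qpow_split:
  "qpow q N e = qpow q N (\<lambda>s t. if s < t then e s t else 0) * qpow q N (\<lambda>s t. if t < s then e s t else 0)"
proof -
  have "qpow q N e = qpow q N (\<lambda>s t. (if s < t then e s t else 0) + (if t < s then e s t else 0)
      + (if s = t then e s t else 0))"
    by (rule qpow_cong) auto
  then show ?thesis by (simp only: qpow_add qpow_diag) simp
qed

lemma qpow_eq_antisym: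
  assumes "\<And>s t. s \<in> {1..N} \<Longrightarrow> t \<in> {1..N} \<Longrightarrow> s < t \<Longrightarrow> e1 s t + e2 t s = e2 s t + e1 t s"
  shows "qpow q N e1 = qpow q N e2"
proof -
  let ?U = "\<lambda>e. qpow q N (\<lambda>s t. if s < t then e s t else 0)"
  let ?T = "\<lambda>e. qpow q N (\<lambda>s t. if s < t then e t s else 0)"
  have upper: "qpow q N e * ?T e = ?U e" for e
    using qpow_transpose[of e] by (subst qpow_split) (simp add: mult.assoc)
  have "?U e1 * ?T e2 = qpow q N (\<lambda>s t. (if s < t then e1 s t else 0) + (if s < t then e2 t s else 0))"
    by (simp only: qpow_add)
  also have "\<dots> = qpow q N (\<lambda>s t. (if s < t then e2 s t else 0) + (if s < t then e1 t s else 0))"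
  proof (rule qpow_cong)
    fix s t assume st: "s \<in> {1..N}" "t \<in> {1..N}"
    show "(if s < t then e1 s t else 0) + (if s < t then e2 t s else 0)
      = (if s < t then e2 s t else 0) + (if s < t then e1 t s else 0)"
    proof (cases "s < t")
      case True
      then show ?thesis using assms[OF st True] by simp
    qed simp
  qed
  also have "\<dots> = ?U e2 * ?T e1" by (simp only: qpow_add)
  finally have "qpow q N e1 * ?T e1 * ?T e2 = qpow q N e2 * ?T e2 * ?T e1"
    by (simp only: upper)
  then have "qpow q N e1 * (?T e1 * ?T e2) = qpow q N e2 * (?T e1 * ?T e2)"
    by (simp only: ac_simps)
  then show ?thesis using qpow_nonzero by simp
qed

end

definition wedge_exp :: "nat list \<Rightarrow> expv" where
  "wedge_exp J = (\<lambda>i. if i \<in> set J then 1 else 0)"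

text \<open>The weight of \<open>x\<^sup>a \<otimes> J \<otimes> x\<^sup>b\<close>: the coefficient produced by reordering the word
  \<open>x\<^sup>a (\<Prod>\<^sub>j\<^sub>\<in>\<^sub>J x\<^sub>j) x\<^sup>b\<close> into an ordered monomial.  Rescaling every basis vector by its weight
  turns the maps for \<open>q\<close> into the maps for \<open>q \<equiv> 1\<close>.\<close>
definition weight :: "(nat \<Rightarrow> nat \<Rightarrow> 'k::comm_ring_1) \<Rightarrow> nat \<Rightarrow> kbas \<Rightarrow> 'k" where
  "weight q N x = (case x of (a,J,b) \<Rightarrow>
     mcoef q N a (wedge_exp J) * mcoef q N a b * mcoef q N (wedge_exp J) b)"

lemma weight_qpow: "weight q N (a,J,b) = qpow q N (\<lambda>s t.
    mcoef_exps a (wedge_exp J) s t + mcoef_exps a b s t + mcoef_exps (wedge_exp J) b s t)"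
  unfolding weight_def mcoef_qpow by (simp add: qpow_add)

lemma weight_nil: "weight q N (a,[],b) = mcoef q N a b"
proof -
  have "wedge_exp [] = ezero" by (simp add: wedge_exp_def ezero_def)
  then show ?thesis by (simp add: weight_def mcoef_zero_left mcoef_zero_right)
qed

lemma prod_distinct_list: "distinct L \<Longrightarrow> (\<Prod>i<length L. h (L!i)) = (\<Prod>x\<in>set L. h x)"
proof -
  assume "distinct L"
  then have "inj_on (nth L) {..<length L}" by (simp add: inj_on_nth)
  moreover have "set L = nth L ` {..<length L}" by (auto simp: set_conv_nth)
  ultimately show ?thesis by (simp add: prod.reindex)
qed

lemma sorted_nth_image_atMost:
  fixes J :: "nat list"
  assumes "sorted_wrt (<) J" "k < length J"
  shows "nth J ` {..k} = {i\<in>set J. i \<le> J!k}"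
proof (intro equalityI subsetI)
  fix x assume "x \<in> nth J ` {..k}"
  then obtain s where "s \<le> k" "x = J!s" by auto
  then show "x \<in> {i\<in>set J. i \<le> J!k}"
    using assms sorted_wrt_nth_less[OF assms(1), of s k] by (cases "s = k") auto
next
  fix x assume x: "x \<in> {i\<in>set J. i \<le> J!k}"
  then obtain s where s: "s < length J" "x = J!s" by (auto simp: in_set_conv_nth)
  have "s \<le> k"
    using x s sorted_wrt_nth_less[OF assms(1), of k s] assms(2) by (cases "k < s") auto
  then show "x \<in> nth J ` {..k}" using s by auto
qed

lemma sorted_nth_image_atLeast:
  fixes J :: "nat list"
  assumes "sorted_wrt (<) J" "k < length J"
  shows "nth J ` {k..<length J} = {i\<in>set J. J!k \<le> i}"
proof (intro equalityI subsetI)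
  fix x assume "x \<in> nth J ` {k..<length J}"
  then obtain s where "k \<le> s" "s < length J" "x = J!s" by auto
  then show "x \<in> {i\<in>set J. J!k \<le> i}"
    using sorted_wrt_nth_less[OF assms(1), of k s] by (cases "s = k") auto
next
  fix x assume x: "x \<in> {i\<in>set J. J!k \<le> i}"
  then obtain s where s: "s < length J" "x = J!s" by (auto simp: in_set_conv_nth)
  have "k \<le> s"
    using x s sorted_wrt_nth_less[OF assms(1), of s k] assms(2) by (cases "s < k") auto
  then show "x \<in> nth J ` {k..<length J}" using s by auto
qed

lemma prod_sorted_atMost:
  fixes J :: "nat list"
  assumes "sorted_wrt (<) J" "k < length J"
  shows "(\<Prod>s\<le>k. h (J!s)) = (\<Prod>x\<in>{i\<in>set J. i \<le> J!k}. h x)"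
proof -
  have "inj_on (nth J) {..k}"
    using assms strict_sorted_iff by (intro inj_on_nth) auto
  then show ?thesis unfolding sorted_nth_image_atMost[OF assms, symmetric] by (simp add: prod.reindex)
qed

lemma prod_sorted_atLeast:
  fixes J :: "nat list"
  assumes "sorted_wrt (<) J" "k < length J"
  shows "(\<Prod>s\<in>{k..<length J}. h (J!s)) = (\<Prod>x\<in>{i\<in>set J. J!k \<le> i}. h x)"
proof -
  have "inj_on (nth J) {k..<length J}"
    using assms strict_sorted_iff by (intro inj_on_nth) auto
  then show ?thesis unfolding sorted_nth_image_atLeast[OF assms, symmetric] by (simp add: prod.reindex)
qed

lemma wedge_exp_remove_nth:
  assumes "sorted_wrt (<) J" "k < length J"
  shows "wedge_exp (remove_nth k J) = (\<lambda>i. if i \<in> set J \<and> i \<noteq> J!k then 1 else 0)"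
proof -
  have "distinct J" using assms(1) strict_sorted_iff by blast
  from set_remove_nth[OF this assms(2)] show ?thesis unfolding wedge_exp_def by auto
qed

lemma lam_qpow:
  fixes J :: "nat list"
  assumes J: "sorted_wrt (<) J" "set J \<subseteq> {1..N}" and m: "next_slot J \<le> m" "m \<le> N"
  shows "lam q N l J m r = qpow q N (\<lambda>s t.
      (if s \<in> {1..m-1} \<and> t \<in> {m..N} then l s * l t else 0)
    + (if s \<in> {m} \<and> t \<in> {1..N} then l t * (r - 1) else 0)
    + (if s \<in> set J \<and> t \<in> {m} then l m - r else 0)
    + (if s \<in> set (J @ [m]) \<and> t \<in> {m+1..N} then l t else 0))"
proof -
  have Jm: "\<And>x. x \<in> set J \<Longrightarrow> x < m" using less_next_slot[OF J(1) _ m(1)] by blast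
  have m1: "1 \<le> m" using m(1) by (cases "J = []") (auto simp: next_slot_def)
  have mN: "m \<in> {1..N}" using m1 m(2) by simp
  have d: "distinct J" using J(1) strict_sorted_iff by blast
  have dm: "distinct (J @ [m])" using d Jm by auto
  have "(\<Prod>s\<in>{1..m-1}. \<Prod>t\<in>{m..N}. q s t ^ (l s * l t))
      = qpow q N (\<lambda>s t. if s \<in> {1..m-1} \<and> t \<in> {m..N} then l s * l t else 0)"
    by (rule qpow_block) (use m m1 in auto)
  moreover have "(\<Prod>t\<in>{1..N}. q m t ^ l t) ^ (r - 1)
      = qpow q N (\<lambda>s t. if s \<in> {m} \<and> t \<in> {1..N} then l t * (r - 1) else 0)"
  proof -
    have "(\<Prod>t\<in>{1..N}. q m t ^ l t) ^ (r - 1) = (\<Prod>s\<in>{m}. \<Prod>t\<in>{1..N}. q s t ^ (l t * (r - 1)))"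
      by (simp add: prod_power_distrib power_mult)
    also have "\<dots> = qpow q N (\<lambda>s t. if s \<in> {m} \<and> t \<in> {1..N} then l t * (r - 1) else 0)"
      by (rule qpow_block) (use mN in auto)
    finally show ?thesis .
  qed
  moreover have "(\<Prod>t<length J. q (J!t) m ^ (l m - r))
      = qpow q N (\<lambda>s t. if s \<in> set J \<and> t \<in> {m} then l m - r else 0)"
  proof -
    have "(\<Prod>t<length J. q (J!t) m ^ (l m - r)) = (\<Prod>x\<in>set J. \<Prod>t\<in>{m}. q x t ^ (l m - r))"
      using prod_distinct_list[OF d, of "\<lambda>x. q x m ^ (l m - r)"] by simp
    also have "\<dots> = qpow q N (\<lambda>s t. if s \<in> set J \<and> t \<in> {m} then l m - r else 0)"
      by (rule qpow_block) (use J(2) mN in auto)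
    finally show ?thesis .
  qed
  moreover have "(\<Prod>s<length J + 1. \<Prod>t\<in>{m+1..N}. q ((J @ [m])!s) t ^ l t)
      = qpow q N (\<lambda>s t. if s \<in> set (J @ [m]) \<and> t \<in> {m+1..N} then l t else 0)"
  proof -
    have "(\<Prod>s<length J + 1. \<Prod>t\<in>{m+1..N}. q ((J @ [m])!s) t ^ l t)
        = (\<Prod>x\<in>set (J @ [m]). \<Prod>t\<in>{m+1..N}. q x t ^ l t)"
      using prod_distinct_list[OF dm, of "\<lambda>x. \<Prod>t\<in>{m+1..N}. q x t ^ l t"] by simp
    also have "\<dots> = qpow q N (\<lambda>s t. if s \<in> set (J @ [m]) \<and> t \<in> {m+1..N} then l t else 0)"
      by (rule qpow_block) (use J(2) mN in auto)
    finally show ?thesis .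
  qed
  ultimately show ?thesis unfolding lam_def by (simp only: qpow_add)
qed

context qparams
begin

lemma weight_face_left:
  fixes J :: "nat list"
  assumes J: "sorted_wrt (<) J" "set J \<subseteq> {1..N}" and k: "k < length J"
  shows "(\<Prod>s\<le>k. q (J!s) (J!k)) * mcoef q N a (eunit (J!k))
       * weight q N (eadd a (eunit (J!k)), remove_nth k J, b) = weight q N (a,J,b)"
proof -
  define j where "j = J!k"
  have jin: "j \<in> set J" using k by (simp add: j_def)
  define A where "A = {i\<in>set J. i \<le> j}"
  have "(\<Prod>s\<le>k. q (J!s) j) = (\<Prod>x\<in>A. \<Prod>t\<in>{j}. q x t ^ 1)"
    unfolding A_def j_def using prod_sorted_atMost[OF J(1) k] by simp
  also have "\<dots> = qpow q N (\<lambda>s t. if s \<in> A \<and> t \<in> {j} then 1 else 0)"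
    by (rule qpow_block) (use J(2) jin in \<open>auto simp: A_def\<close>)
  finally have P: "(\<Prod>s\<le>k. q (J!s) j) = qpow q N (\<lambda>s t. if s \<in> A \<and> t \<in> {j} then 1 else 0)" .
  show ?thesis
    unfolding j_def[symmetric] P mcoef_qpow weight_qpow wedge_exp_remove_nth[OF J(1) k, folded j_def]
    unfolding qpow_add[symmetric]
  proof (rule qpow_eq_antisym, goal_cases)
    case (1 s t)
    then show ?case
      by (simp add: mcoef_exps_def eadd_def eunit_def wedge_exp_def A_def) (auto simp: algebra_simps jin)
  qed
qed

lemma weight_face_right:
  fixes J :: "nat list"
  assumes J: "sorted_wrt (<) J" "set J \<subseteq> {1..N}" and k: "k < length J"
  shows "(\<Prod>s\<in>{k..<length J}. q (J!k) (J!s)) * mcoef q N (eunit (J!k)) b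
       * weight q N (a, remove_nth k J, eadd (eunit (J!k)) b) = weight q N (a,J,b)"
proof -
  define j where "j = J!k"
  have jin: "j \<in> set J" using k by (simp add: j_def)
  define B where "B = {i\<in>set J. j \<le> i}"
  have "(\<Prod>s\<in>{k..<length J}. q j (J!s)) = (\<Prod>s\<in>{j}. \<Prod>t\<in>B. q s t ^ 1)"
    unfolding B_def j_def using prod_sorted_atLeast[OF J(1) k] by simp
  also have "\<dots> = qpow q N (\<lambda>s t. if s \<in> {j} \<and> t \<in> B then 1 else 0)"
    by (rule qpow_block) (use J(2) jin in \<open>auto simp: B_def\<close>)
  finally have P: "(\<Prod>s\<in>{k..<length J}. q j (J!s)) = qpow q N (\<lambda>s t. if s \<in> {j} \<and> t \<in> B then 1 else 0)" .
  show ?thesis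
    unfolding j_def[symmetric] P mcoef_qpow weight_qpow wedge_exp_remove_nth[OF J(1) k, folded j_def]
    unfolding qpow_add[symmetric]
  proof (rule qpow_eq_antisym, goal_cases)
    case (1 s t)
    then show ?case
      by (simp add: mcoef_exps_def eadd_def eunit_def wedge_exp_def B_def) (auto simp: algebra_simps jin)
  qed
qed

lemma weight_tbas:
  fixes J :: "nat list"
  assumes J: "sorted_wrt (<) J" "set J \<subseteq> {1..N}" and m: "next_slot J \<le> m" "m \<le> N"
    and r: "1 \<le> r" "r \<le> l m"
  shows "lam q N l J m r * mcoef q N a (uexp l m r)
       * weight q N (eadd a (uexp l m r), J @ [m], vexp l m r) = weight q N (a,J,l)"
proof -
  have Jm: "\<And>x. x \<in> set J \<Longrightarrow> x < m" using less_next_slot[OF J(1) _ m(1)] by blast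
  \<comment> \<open>Write \<open>r = r' + 1\<close> and \<open>l\<^sub>m = r + d\<close> to get rid of the truncated subtractions.\<close>
  define r' where "r' = r - 1"
  define d where "d = l m - r"
  have rd: "r = Suc r'" "l m = Suc r' + d" using r unfolding r'_def d_def by auto
  have lmr: "l m - r = d" "r - 1 = r'" using rd by auto
  have snoc: "wedge_exp (J @ [m]) = (\<lambda>i. if i \<in> set J \<or> i = m then 1 else 0)"
    unfolding wedge_exp_def by auto
  show ?thesis
    unfolding lam_qpow[OF J m] mcoef_qpow weight_qpow snoc unfolding qpow_add[symmetric]
  proof (rule qpow_eq_antisym, goal_cases)
    case (1 s t)
    then show ?case
      by (simp add: mcoef_exps_def eadd_def uexp_def vexp_def wedge_exp_def lmr)
        (clarsimp simp: rd, auto simp: algebra_simps dest: Jm)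
  qed
qed

end

definition rescale :: "(nat \<Rightarrow> nat \<Rightarrow> 'k::comm_ring_1) \<Rightarrow> nat \<Rightarrow> (kbas \<Rightarrow> 'k) \<Rightarrow> kbas \<Rightarrow> 'k" where
  "rescale q N f x = weight q N x * f x"

lemma tm1_support: "tm1 g y \<noteq> 0 \<Longrightarrow> \<exists>c. y = (c, [], ezero)"
  unfolding tm1_def lext_def by (auto intro: ccontr simp: sum.neutral)

text \<open>\<open>t\<^sub>-\<^sub>1\<close> only produces basis vectors \<open>x\<^sup>c \<otimes> 1\<close>, whose weight is \<open>1\<close>.\<close>
lemma rescale_tm1: "rescale q N (tm1 g) = tm1 g"
proof
  fix y
  show "rescale q N (tm1 g) y = tm1 g y"
  proof (cases "tm1 g y = 0")
    case False
    then obtain c where "y = (c, [], ezero)" using tm1_support by blast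
    then show ?thesis by (simp add: rescale_def weight_nil mcoef_zero_right)
  qed (simp add: rescale_def)
qed

lemma d0_tm1:
  assumes g: "inA N g"
  shows "d0 q N (tm1 g) = (g :: expv \<Rightarrow> 'k::comm_ring_1)"
proof
  fix c
  have fin: "finite {x. g x \<noteq> 0}" using g unfolding inA_def by simp
  have tm1_bas: "(\<lambda>a y. if y = (a, [], ezero) then 1 else 0) = (\<lambda>a. kdelta (a, [], ezero) :: kbas \<Rightarrow> 'k)"
    by (auto simp: kdelta_def fun_eq_iff)
  have fin_bas: "finite {z. kdelta (a, [], ezero) z \<noteq> (0::'k)}" for a
    by (auto simp: kdelta_def)
  have "d0 q N (tm1 g) c
      = (\<Sum>x\<in>{x. g x \<noteq> 0}. g x * d0 q N (kdelta (x, [], ezero)) c)"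
    unfolding d0_def tm1_def tm1_bas by (rule lext_comp[OF fin fin_bas])
  also have "\<dots> = (\<Sum>x\<in>{x. g x \<noteq> 0}. g x * kdelta x c)"
    by (intro sum.cong refl)
      (simp add: d0_def lext_single kdelta_def eadd_def ezero_def mcoef_zero_right[unfolded ezero_def])
  also have "\<dots> = g c" using lext_kdelta[OF fin] unfolding lext_def by metis
  finally show "d0 q N (tm1 g) c = g c" .
qed

context qparams
begin

lemma weight_nonzero: "weight q N x \<noteq> 0"
  by (cases x) (simp add: weight_def mcoef_nonzero)

lemma rescale_inj: "rescale q N f = rescale q N g \<Longrightarrow> f = g"
  by (auto simp: rescale_def fun_eq_iff weight_nonzero)

lemma inK_rescale: "inK N p f \<Longrightarrow> inK N p (rescale q N f)"
  unfolding inK_def rescale_def by (auto simp: weight_nonzero)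

lemma dbas_rescale:
  assumes J: "sorted_wrt (<) J" "set J \<subseteq> {1..N}"
  shows "dbas q N (a,J,b) y * weight q N y = weight q N (a,J,b) * dbas qone N (a,J,b) y"
proof -
  let ?x = "(a,J,b)"
  let ?L = "\<lambda>k. (eadd a (eunit (J!k)), remove_nth k J, b)"
  let ?R = "\<lambda>k. (a, remove_nth k J, eadd (eunit (J!k)) b)"
  have "dbas q N ?x y * weight q N y = (\<Sum>k<length J.
      (if y = ?L k then (-1)^k * (\<Prod>s\<le>k. q (J!s) (J!k)) * mcoef q N a (eunit (J!k)) else 0)
        * weight q N y
    - (if y = ?R k then (-1)^k * (\<Prod>s\<in>{k..<length J}. q (J!k) (J!s)) * mcoef q N (eunit (J!k)) b
       else 0) * weight q N y)"
    unfolding dbas_def by (simp add: sum_distrib_right left_diff_distrib)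
  also have "\<dots> = (\<Sum>k<length J. weight q N ?x * ((-1)^k * face a (remove_nth k J) (J!k) b y))"
  proof (rule sum.cong[OF refl])
    fix k assume "k \<in> {..<length J}"
    then have k: "k < length J" by simp
    have "(if y = ?L k then (-1)^k * (\<Prod>s\<le>k. q (J!s) (J!k)) * mcoef q N a (eunit (J!k)) else 0)
        * weight q N y = weight q N ?x * ((-1)^k * kdelta (?L k) y)"
      using weight_face_left[OF J k, of a b] by (auto simp: kdelta_def mult.assoc mult.left_commute)
    moreover have "(if y = ?R k then (-1)^k * (\<Prod>s\<in>{k..<length J}. q (J!k) (J!s))
        * mcoef q N (eunit (J!k)) b else 0) * weight q N y = weight q N ?x * ((-1)^k * kdelta (?R k) y)"
      using weight_face_right[OF J k, of b a] by (auto simp: kdelta_def mult.assoc mult.left_commute)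
    ultimately show "(if y = ?L k then (-1)^k * (\<Prod>s\<le>k. q (J!s) (J!k)) * mcoef q N a (eunit (J!k)) else 0)
        * weight q N y
      - (if y = ?R k then (-1)^k * (\<Prod>s\<in>{k..<length J}. q (J!k) (J!s)) * mcoef q N (eunit (J!k)) b
         else 0) * weight q N y
      = weight q N ?x * ((-1)^k * face a (remove_nth k J) (J!k) b y)"
      by (simp add: face_def right_diff_distrib)
  qed
  also have "\<dots> = weight q N ?x * dbas qone N ?x y"
    by (simp add: dbas_qone sum_distrib_left)
  finally show ?thesis .
qed

lemma tbas_rescale:
  assumes J: "sorted_wrt (<) J" "set J \<subseteq> {1..N}"
  shows "tbas q N (a,J,l) y * weight q N y = weight q N (a,J,l) * tbas qone N (a,J,l) y"
proof -
  let ?x = "(a,J,l)" and ?y = "\<lambda>m r. (eadd a (uexp l m r), J @ [m], vexp l m r)"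
  have "tbas q N ?x y * weight q N y = (-1)^(length J + 1) * (\<Sum>m\<in>{next_slot J..N}. \<Sum>r\<in>{1..l m}.
      (if y = ?y m r then lam q N l J m r * mcoef q N a (uexp l m r) else 0) * weight q N y)"
    unfolding tbas_def next_slot_def[symmetric] by (simp add: sum_distrib_right mult.assoc)
  also have "\<dots> = (-1)^(length J + 1) * (\<Sum>m\<in>{next_slot J..N}. \<Sum>r\<in>{1..l m}.
      weight q N ?x * kdelta (?y m r) y)"
    using weight_tbas[OF J] by (intro arg_cong[where f = "\<lambda>s. _ * s"] sum.cong refl) (auto simp: kdelta_def)
  also have "\<dots> = weight q N ?x * tbas qone N ?x y"
    by (simp add: tbas_qone sum_distrib_left mult.left_commute)
  finally show ?thesis .
qed

lemma rescale_dK: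
  assumes f: "inK N p f"
  shows "rescale q N (dK q N f) = dK qone N (rescale q N f)"
proof
  fix y
  show "rescale q N (dK q N f) y = dK qone N (rescale q N f) y"
    unfolding rescale_def dK_def mult.commute[of "weight q N y"]
  proof (rule lext_rescale[OF inK_fin[OF f]])
    fix x y assume "f x \<noteq> 0"
    moreover obtain a J b where xe: "x = (a,J,b)" by (cases x) auto
    ultimately have "sorted_wrt (<) J" "set J \<subseteq> {1..N}" using inK_valid[OF f] by (auto simp: valid_wedge_def)
    then show "dbas q N x y * weight q N y = weight q N x * dbas qone N x y"
      unfolding xe by (rule dbas_rescale)
  qed
qed

lemma rescale_tK:
  assumes f: "inK N p f"
  shows "rescale q N (tK q N f) = tK qone N (rescale q N f)"
proof
  fix y
  show "rescale q N (tK q N f) y = tK qone N (rescale q N f) y"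
    unfolding rescale_def tK_def mult.commute[of "weight q N y"]
  proof (rule lext_rescale[OF inK_fin[OF f]])
    fix x y assume "f x \<noteq> 0"
    moreover obtain a J b where xe: "x = (a,J,b)" by (cases x) auto
    ultimately have "sorted_wrt (<) J" "set J \<subseteq> {1..N}" using inK_valid[OF f] by (auto simp: valid_wedge_def)
    then show "tbas q N x y * weight q N y = weight q N x * tbas qone N x y"
      unfolding xe by (rule tbas_rescale)
  qed
qed

text \<open>In degree \<open>0\<close> the weight of \<open>x\<^sup>a \<otimes> x\<^sup>b\<close> is exactly the coefficient of the product map.\<close>
lemma d0_rescale:
  assumes f: "inK N 0 f"
  shows "d0 q N f = d0 qone N (rescale q N f)"
proof
  fix c
  have "d0 q N f c * 1 = d0 qone N (rescale q N f) c"
    unfolding d0_def rescale_def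
  proof (rule lext_rescale[OF inK_fin[OF f]])
    fix x y assume "f x \<noteq> 0"
    then obtain a b where xe: "x = (a,[],b)"
      using inK_valid[OF f] by (cases x) (auto simp: valid_wedge_def)
    show "(case x of (a, J, b) \<Rightarrow> \<lambda>y. if y = eadd a b then mcoef q N a b else 0) y * 1 =
          weight q N x * (case x of (a, J, b) \<Rightarrow> \<lambda>y. if y = eadd a b then mcoef qone N a b else 0) y"
      unfolding xe weight_nil by simp
  qed
  then show "d0 q N f c = d0 qone N (rescale q N f) c" by simp
qed

lemma contraction_zero:
  assumes f: "inK N 0 f"
  shows "(\<lambda>y. tm1 (d0 q N f) y + dK q N (tK q N f) y) = f"
proof (rule rescale_inj)
  have "rescale q N (\<lambda>y. tm1 (d0 q N f) y + dK q N (tK q N f) y)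
      = (\<lambda>y. rescale q N (tm1 (d0 q N f)) y + rescale q N (dK q N (tK q N f)) y)"
    by (simp add: rescale_def fun_eq_iff distrib_left)
  also have "\<dots> = (\<lambda>y. tm1 (d0 qone N (rescale q N f)) y + dK qone N (tK qone N (rescale q N f)) y)"
    by (simp add: rescale_tm1 d0_rescale[OF f] rescale_dK[OF inK_tK[OF f]] rescale_tK[OF f])
  also have "\<dots> = rescale q N f" by (rule contraction_qone_zero[OF inK_rescale[OF f]])
  finally show "rescale q N (\<lambda>y. tm1 (d0 q N f) y + dK q N (tK q N f) y) = rescale q N f" .
qed

lemma contraction:
  assumes f: "inK N p f" and p: "p \<ge> 1"
  shows "(\<lambda>y. tK q N (dK q N f) y + dK q N (tK q N f) y) = f"
proof (rule rescale_inj)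
  have "rescale q N (\<lambda>y. tK q N (dK q N f) y + dK q N (tK q N f) y)
      = (\<lambda>y. rescale q N (tK q N (dK q N f)) y + rescale q N (dK q N (tK q N f)) y)"
    by (simp add: rescale_def fun_eq_iff distrib_left)
  also have "\<dots> = (\<lambda>y. tK qone N (dK qone N (rescale q N f)) y + dK qone N (tK qone N (rescale q N f)) y)"
    by (simp add: rescale_dK[OF f] rescale_dK[OF inK_tK[OF f]] rescale_tK[OF f] rescale_tK[OF inK_dK[OF f]])
  also have "\<dots> = rescale q N f" by (rule contraction_qone[OF inK_rescale[OF f] p])
  finally show "rescale q N (\<lambda>y. tK q N (dK q N f) y + dK q N (tK q N f) y) = rescale q N f" .
qed

end

theorem mainTheorem3:
  fixes q :: "nat \<Rightarrow> nat \<Rightarrow> 'k::field" and N :: nat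
  assumes "N \<ge> 1"
    and "\<And>i j. i \<in> {1..N} \<Longrightarrow> j \<in> {1..N} \<Longrightarrow> q i j \<noteq> 0"
    and "\<And>i. i \<in> {1..N} \<Longrightarrow> q i i = 1"
    and "\<And>i j. i \<in> {1..N} \<Longrightarrow> j \<in> {1..N} \<Longrightarrow> q j i = inverse (q i j)"
  shows "(\<forall>g. inA N g \<longrightarrow> d0 q N (tm1 g) = g)
       \<and> (\<forall>f. inK N 0 f \<longrightarrow> (\<lambda>y. tm1 (d0 q N f) y + dK q N (tK q N f) y) = f)
       \<and> (\<forall>p\<ge>1. \<forall>f. inK N p f \<longrightarrow> (\<lambda>y. tK q N (dK q N f) y + dK q N (tK q N f) y) = f)"
proof -
  interpret qparams q N using assms(2-4) by unfold_locales blast+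
  show ?thesis using d0_tm1 contraction_zero contraction by blast
qed

end
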